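(* For each fixed $\omega\in\Omega_0^*$, the sample path $(u,v)\mapsto\dot X(u,v,\omega)$ is a three times continuously differentiable function on $\mathbb{R}\times(1/\alpha;1)$. Consequently, for all real $M,a,b$ with $M>0$ and $1/\alpha<a<b<1$ (with the convention $0/0=0$), $$\sup_{(u_1,u_2,v_1,v_2)\in[-M;M]^2\times[a;b]^2}\left\{\frac{|\dot X(u_1,v_1,\omega)-\dot X(u_2,v_2,\omega)|}{|u_1-u_2|+|v_1-v_2|}\right\}<\infty,$$ and in particular $$\sup_{(u_1,u_2,v)\in[-M;M]^2\times[a;b]}\left\{\frac{|\dot X(u_1,v,\omega)-\dot X(u_2,v,\omega)|}{|u_1-u_2|}\right\}<\infty.$$
   Context: Fix $\alpha\in(1,2)$. Let $Z_\alpha(ds)$ be an independently scattered symmetric $\alpha$-stable random measure on $\mathbb{R}$ with Lebesgue control measure on $(\Omega,\mathcal{F},\mathbb{P})$. For $x,\kappa\in\mathbb{R}$, $(x)_+^\kappa=x^\kappa$ if $x>0$ and $0$ otherwise. Let $\psi$ be a three times continuously differentiable compactly supported Daubechies mother wavelet generating an orthonormal basis of $L^2(\mathbb{R})$. For $(x,v)\in\mathbb{R}\times(1/\alpha;1)$, $\Psi(x,v)=\int_{\mathbb{R}}(x-s)_+^{v-1/\alpha}\psi(s)\,ds$; for $(j,k)\in\mathbb{Z}^2$, $\epsilon_{j,k}=2^{j/\alpha}\int_{\mathbb{R}}\psi(2^js-k)Z_\alpha(ds)$. $\Omega_0^*$ is an event of probability $1$ such that for every $\eta>0$ there is a positive finite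 random variable $C_\eta$ with $|\epsilon_{j,k}(\omega)|\le C_\eta(\omega)(3+|j|)^{1/\alpha+\eta}(3+|k|)^{1/\alpha+\eta}$ for all $\omega\in\Omega_0^*$, $(j,k)\in\mathbb{Z}^2$ (such an event exists). The low frequency part $\dot X$ is defined on $\Omega_0^*$, for $(u,v)\in\mathbb{R}\times(1/\alpha;1)$, by $\dot X(u,v)=\sum_{j=1}^{\infty}\sum_{k\in\mathbb{Z}}2^{jv}\epsilon_{-j,k}\big(\Psi(2^{-j}u-k,v)-\Psi(-k,v)\big)$ (this series converges on $\Omega_0^*$ uniformly on compact subsets of $\mathbb{R}\times(1/\alpha;1)$). One may use that all partial derivatives $\partial_x^p\partial_v^q\Psi$, $p\in\{0,1,2,3\}$, $q\in\mathbb{Z}_+$, exist, are continuous and satisfy $\sup_{(x,v)\in\mathbb{R}\times[a;b]}(3+|x|)^2|\partial_x^p\partial_v^q\Psi(x,v)|<\infty$ for every compact $[a;b]\subset(1/\alpha;1)$. *)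

theory Defs
  imports "HOL-Analysis.Analysis"
begin

definition pospow :: "real \<Rightarrow> real \<Rightarrow> real" where
  "pospow x \<kappa> = (if x > 0 then x powr \<kappa> else 0)"

definition C3_fun :: "(real \<Rightarrow> real) \<Rightarrow> bool" where
  "C3_fun f \<longleftrightarrow> (\<forall>k<3. \<forall>x. ((deriv ^^ k) f) differentiable (at x))
                 \<and> continuous_on UNIV ((deriv ^^ 3) f)"

definition pdx :: "(real \<times> real \<Rightarrow> real) \<Rightarrow> real \<times> real \<Rightarrow> real" where
  "pdx f = (\<lambda>(x, v). deriv (\<lambda>y. f (y, v)) x)"

definition pdv :: "(real \<times> real \<Rightarrow> real) \<Rightarrow> real \<times> real \<Rightarrow> real" where
  "pdv f = (\<lambda>(x, v). deriv (\<lambda>w. f (x, w)) v)"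

definition mpd :: "nat \<Rightarrow> nat \<Rightarrow> (real \<times> real \<Rightarrow> real) \<Rightarrow> real \<times> real \<Rightarrow> real" where
  "mpd p q f = (pdx ^^ p) ((pdv ^^ q) f)"

definition C3_on2 :: "(real \<times> real) set \<Rightarrow> (real \<times> real \<Rightarrow> real) \<Rightarrow> bool" where
  "C3_on2 S f \<longleftrightarrow>
     (\<forall>p q. p + q < 3 \<longrightarrow> (\<forall>z\<in>S. mpd p q f differentiable (at z)))
   \<and> (\<forall>p q. p + q \<le> 3 \<longrightarrow> continuous_on S (mpd p q f))"

definition wav :: "(real \<Rightarrow> real) \<Rightarrow> int \<Rightarrow> int \<Rightarrow> real \<Rightarrow> real" where
  "wav \<psi> j k s = 2 powr (real_of_int j / 2) * \<psi> (2 powr (real_of_int j) * s - real_of_int k)"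

definition wavelet_ONB :: "(real \<Rightarrow> real) \<Rightarrow> bool" where
  "wavelet_ONB \<psi> \<longleftrightarrow>
     \<psi> \<in> borel_measurable lborel
   \<and> (\<forall>j k j' k'. integrable lborel (\<lambda>s. wav \<psi> j k s * wav \<psi> j' k' s)
        \<and> (LINT s|lborel. wav \<psi> j k s * wav \<psi> j' k' s) = (if (j, k) = (j', k') then 1 else 0))
   \<and> (\<forall>f::real \<Rightarrow> real. f \<in> borel_measurable lborel \<longrightarrow> integrable lborel (\<lambda>s. (f s)\<^sup>2) \<longrightarrow>
        (\<forall>j k. (LINT s|lborel. f s * wav \<psi> j k s) = 0) \<longrightarrow> (AE s in lborel. f s = 0))"

definition Psi :: "real \<Rightarrow> (real \<Rightarrow> real) \<Rightarrow> real \<times> real \<Rightarrow> real" where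
  "Psi \<alpha> \<psi> = (\<lambda>(x, v). LINT s|lborel. pospow (x - s) (v - 1 / \<alpha>) * \<psi> s)"

text \<open>The low frequency part, evaluated at a fixed omega, where eps j k stands for
  epsilon_{j,k}(omega).  The outer sum is over j = 1, 2, ... (index Suc n), the inner over k in Z.\<close>
definition Xdot :: "real \<Rightarrow> (real \<Rightarrow> real) \<Rightarrow> (int \<Rightarrow> int \<Rightarrow> real) \<Rightarrow> real \<times> real \<Rightarrow> real" where
  "Xdot \<alpha> \<psi> eps = (\<lambda>(u, v). \<Sum>n. let j = Suc n in
      (\<Sum>\<^sub>\<infinity>k\<in>(UNIV::int set). 2 powr (real j * v) * eps (- int j) k *
         (Psi \<alpha> \<psi> (u / 2 ^ j - real_of_int k, v) - Psi \<alpha> \<psi> (- real_of_int k, v))))"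

end

theory Submission
  imports Defs "HOL-Real_Asymp.Real_Asymp"
begin

text \<open>Each term \<open>2 powr (j v) * eps (-j) k * (\<Psi> (u / 2^j - k, v) - \<Psi> (-k, v))\<close> of \<open>Xdot\<close> is
  three times continuously differentiable, its partial derivatives being given by Leibniz's rule.
  On \<open>[-M, M] \<times> [a, b]\<close> each of them, up to order 3, is bounded by \<open>a j * b k\<close>: the increment
  of \<open>\<Psi>\<close> (or, once an x-derivative is taken, the dilation) gains a factor \<open>2 powr (-j)\<close>, so that
  \<open>a j \<approx> j^4 * 2 powr (j (b - 1))\<close> decays geometrically, while the decay \<open>(3 + |x|)^-2\<close> of the
  partials of \<open>\<Psi>\<close> against the growth \<open>|k| powr r\<close>, \<open>r < 1\<close>, of \<open>eps\<close> gives
  \<open>b k \<approx> |k| powr (r - 2)\<close>.  Hence the double series, rearranged into a single one, converges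
  uniformly on compacts together with all its partial derivatives of order at most 3 and can be
  differentiated term by term.  Lipschitz bounds on compact rectangles then follow from the mean
  value theorem.\<close>

section \<open>Partial derivatives in two variables\<close>

lemma mpd_0_0 [simp]: "mpd 0 0 f = f"
  by (simp add: mpd_def)

lemma mpd_Suc_left: "mpd (Suc p) q f = pdx (mpd p q f)"
  by (simp add: mpd_def)

lemma mpd_0_Suc: "mpd 0 (Suc q) f = pdv (mpd 0 q f)"
  by (simp add: mpd_def)

lemma mpd_Suc_left_has_derivative:
  assumes "(\<lambda>y. mpd p q f (y, v)) differentiable (at x)"
  shows "((\<lambda>y. mpd p q f (y, v)) has_real_derivative mpd (Suc p) q f (x, v)) (at x)"
  using assms by (simp add: mpd_Suc_left pdx_def DERIV_deriv_iff_real_differentiable)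

lemma mpd_0_Suc_has_derivative:
  assumes "(\<lambda>w. mpd 0 q f (x, w)) differentiable (at v)"
  shows "((\<lambda>w. mpd 0 q f (x, w)) has_real_derivative mpd 0 (Suc q) f (x, v)) (at v)"
  using assms by (simp add: mpd_0_Suc pdv_def DERIV_deriv_iff_real_differentiable)

lemma mean_value_between:
  fixes f f' :: "real \<Rightarrow> real"
  assumes "\<And>t. t \<in> {min a b..max a b} \<Longrightarrow> (f has_real_derivative f' t) (at t)"
  shows "\<exists>t\<in>{min a b..max a b}. f b - f a = (b - a) * f' t"
proof (cases a b rule: linorder_cases)
  case less
  then obtain z where "a < z" "z < b" "f b - f a = (b - a) * f' z"
    using MVT2[of a b f f'] assms by auto
  then show ?thesis using less by (intro bexI[of _ z]) auto
next
  case equal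
  then show ?thesis by auto
next
  case greater
  then obtain z where "b < z" "z < a" "f a - f b = (a - b) * f' z"
    using MVT2[of b a f f'] assms by auto
  then show ?thesis using greater by (intro bexI[of _ z]) (auto simp: algebra_simps)
qed

lemma between_imp_abs_le: "t \<in> {min a b..max a b} \<Longrightarrow> \<bar>t - a\<bar> \<le> \<bar>b - a\<bar>"
  for a b t :: real
  by (auto simp: min_def max_def split: if_splits)

lemma has_derivative_of_partials:
  fixes g Dx :: "real \<times> real \<Rightarrow> real"
  assumes S: "open S" "(x, v) \<in> S"
    and dx: "\<And>y w. (y, w) \<in> S \<Longrightarrow> ((\<lambda>t. g (t, w)) has_real_derivative Dx (y, w)) (at y)"
    and Dx_cont: "isCont Dx (x, v)"
    and dv: "((\<lambda>w. g (x, w)) has_real_derivative Dv) (at v)"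
  shows "(g has_derivative (\<lambda>(h, k). h * Dx (x, v) + k * Dv)) (at (x, v))"
  unfolding has_derivative_at_alt
proof (intro conjI allI impI)
  show "bounded_linear (\<lambda>(h::real, k::real). h * Dx (x, v) + k * Dv)"
    by (auto intro!: bounded_linear_intros simp: case_prod_unfold)
  fix e :: real assume e: "e > 0"
  obtain d1 where d1: "d1 > 0" "ball (x, v) d1 \<subseteq> S"
    using S open_contains_ball by blast
  obtain d2 where d2: "d2 > 0" "\<And>z. dist z (x, v) < d2 \<Longrightarrow> \<bar>Dx z - Dx (x, v)\<bar> < e/2"
    using Dx_cont e unfolding continuous_at_eps_delta dist_real_def by (metis half_gt_zero)
  have "((\<lambda>w. g (x, w)) has_derivative (\<lambda>k. Dv * k)) (at v)"
    using dv by (simp add: has_field_derivative_def)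
  then obtain d3 where d3: "d3 > 0" "\<And>w. \<bar>w - v\<bar> < d3 \<Longrightarrow>
      \<bar>g (x, w) - g (x, v) - Dv * (w - v)\<bar> \<le> e/2 * \<bar>w - v\<bar>"
    unfolding has_derivative_at_alt using e by (metis half_gt_zero real_norm_def)
  define d where "d = min d1 (min d2 d3)"
  show "\<exists>d>0. \<forall>z. norm (z - (x, v)) < d \<longrightarrow>
      norm (g z - g (x, v) - (case z - (x, v) of (h, k) \<Rightarrow> h * Dx (x, v) + k * Dv))
        \<le> e * norm (z - (x, v))"
  proof (intro exI[of _ d] conjI allI impI)
    show "d > 0" using d1 d2 d3 by (simp add: d_def)
    fix z :: "real \<times> real"
    assume z: "norm (z - (x, v)) < d"
    obtain u w where z_eq: "z = (u, w)" by fastforce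
    have hu: "\<bar>u - x\<bar> \<le> norm (z - (x, v))" and hw: "\<bar>w - v\<bar> \<le> norm (z - (x, v))"
      using norm_fst_le[of "u - x" "w - v"] norm_snd_le[of "w - v" "u - x"] by (auto simp: z_eq)
    have near: "dist (t, w) (x, v) < d" if "t \<in> {min x u..max x u}" for t
    proof -
      have "(t - x)\<^sup>2 \<le> (u - x)\<^sup>2"
        using between_imp_abs_le[OF that] by (simp add: abs_le_square_iff)
      then have "dist (t, w) (x, v) \<le> norm (z - (x, v))"
        by (simp add: z_eq dist_Pair_Pair dist_real_def norm_Pair)
      then show ?thesis using z by simp
    qed
    have "\<exists>t\<in>{min x u..max x u}. g (u, w) - g (x, w) = (u - x) * Dx (t, w)"
    proof (rule mean_value_between)
      fix t assume "t \<in> {min x u..max x u}"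
      then have "(t, w) \<in> ball (x, v) d1"
        using near by (simp add: d_def dist_commute)
      with d1 show "((\<lambda>t. g (t, w)) has_real_derivative Dx (t, w)) (at t)"
        by (intro dx) blast
    qed
    then obtain t where t: "t \<in> {min x u..max x u}" "g (u, w) - g (x, w) = (u - x) * Dx (t, w)"
      by blast
    have "\<bar>Dx (t, w) - Dx (x, v)\<bar> \<le> e/2"
      using d2 near[OF t(1)] unfolding d_def by force
    then have "\<bar>u - x\<bar> * \<bar>Dx (t, w) - Dx (x, v)\<bar> \<le> \<bar>u - x\<bar> * (e/2)"
      by (rule mult_left_mono) simp
    moreover have "g (u, w) - g (x, w) - (u - x) * Dx (x, v) = (u - x) * (Dx (t, w) - Dx (x, v))"
      using t(2) by (simp add: algebra_simps)
    ultimately have "\<bar>g (u, w) - g (x, w) - (u - x) * Dx (x, v)\<bar> \<le> e/2 * \<bar>u - x\<bar>"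
      by (simp add: abs_mult mult.commute)
    moreover have "\<bar>g (x, w) - g (x, v) - (w - v) * Dv\<bar> \<le> e/2 * \<bar>w - v\<bar>"
      using d3(2)[of w] hw z unfolding d_def by (auto simp: mult.commute)
    ultimately have "\<bar>g (u, w) - g (x, v) - ((u - x) * Dx (x, v) + (w - v) * Dv)\<bar>
        \<le> e/2 * \<bar>u - x\<bar> + e/2 * \<bar>w - v\<bar>"
      by linarith
    also have "\<dots> \<le> e/2 * norm (z - (x, v)) + e/2 * norm (z - (x, v))"
      using hu hw e by (intro add_mono mult_left_mono) auto
    finally show "norm (g z - g (x, v) - (case z - (x, v) of (h, k) \<Rightarrow> h * Dx (x, v) + k * Dv))
        \<le> e * norm (z - (x, v))" by (simp add: z_eq)
  qed
qed

lemma second_difference_mean_value: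
  fixes g Dv E :: "real \<times> real \<Rightarrow> real"
  assumes dv: "\<And>y s. y \<in> {min x x'..max x x'} \<Longrightarrow> s \<in> {min v w..max v w} \<Longrightarrow>
      ((\<lambda>s. g (y, s)) has_real_derivative Dv (y, s)) (at s)"
    and dvx: "\<And>y s. y \<in> {min x x'..max x x'} \<Longrightarrow> s \<in> {min v w..max v w} \<Longrightarrow>
      ((\<lambda>y. Dv (y, s)) has_real_derivative E (y, s)) (at y)"
  shows "\<exists>y\<in>{min x x'..max x x'}. \<exists>s\<in>{min v w..max v w}.
      g (x', w) - g (x', v) - g (x, w) + g (x, v) = (x' - x) * (w - v) * E (y, s)"
proof -
  have "\<exists>s\<in>{min v w..max v w}. (g (x', w) - g (x, w)) - (g (x', v) - g (x, v))
      = (w - v) * (Dv (x', s) - Dv (x, s))"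
    by (rule mean_value_between) (intro DERIV_diff dv; simp)
  then obtain s where s: "s \<in> {min v w..max v w}"
    "(g (x', w) - g (x, w)) - (g (x', v) - g (x, v)) = (w - v) * (Dv (x', s) - Dv (x, s))"
    by blast
  have "\<exists>y\<in>{min x x'..max x x'}. Dv (x', s) - Dv (x, s) = (x' - x) * E (y, s)"
    by (rule mean_value_between) (intro dvx s(1))
  then obtain y where "y \<in> {min x x'..max x x'}" "Dv (x', s) - Dv (x, s) = (x' - x) * E (y, s)"
    by blast
  with s show ?thesis by (intro bexI[of _ y] bexI[of _ s]) (auto simp: algebra_simps)
qed

lemma has_real_derivative_swap_partials:
  fixes g Dx Dv E :: "real \<times> real \<Rightarrow> real"
  assumes S: "open S" "(x, v) \<in> S"
    and dx: "\<And>y w. (y, w) \<in> S \<Longrightarrow> ((\<lambda>t. g (t, w)) has_real_derivative Dx (y, w)) (at y)"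
    and dv: "\<And>y w. (y, w) \<in> S \<Longrightarrow> ((\<lambda>s. g (y, s)) has_real_derivative Dv (y, w)) (at w)"
    and dvx: "\<And>y w. (y, w) \<in> S \<Longrightarrow> ((\<lambda>t. Dv (t, w)) has_real_derivative E (y, w)) (at y)"
    and E_cont: "isCont E (x, v)"
  shows "((\<lambda>w. Dx (x, w)) has_real_derivative E (x, v)) (at v)"
  unfolding has_field_derivative_def has_derivative_at_alt
proof (intro conjI allI impI)
  show "bounded_linear ((*) (E (x, v)))" by (rule bounded_linear_mult_right)
  fix e :: real assume e: "e > 0"
  obtain d1 where d1: "d1 > 0" "ball (x, v) d1 \<subseteq> S"
    using S open_contains_ball by blast
  obtain d2 where d2: "d2 > 0" "\<And>z. dist z (x, v) < d2 \<Longrightarrow> \<bar>E z - E (x, v)\<bar> < e"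
    using E_cont e unfolding continuous_at_eps_delta dist_real_def by blast
  define d where "d = min d1 d2 / 2"
  have near: "dist (y, s) (x, v) < min d1 d2" if "\<bar>y - x\<bar> < d" "\<bar>s - v\<bar> < d" for y s
    using norm_Pair_le[of "y - x" "s - v"] that by (simp add: d_def dist_norm)
  show "\<exists>d>0. \<forall>w. norm (w - v) < d \<longrightarrow>
      norm (Dx (x, w) - Dx (x, v) - E (x, v) * (w - v)) \<le> e * norm (w - v)"
  proof (intro exI[of _ d] conjI allI impI)
    show "d > 0" using d1 d2 by (simp add: d_def)
    fix w :: real assume w: "norm (w - v) < d"
    let ?\<Delta> = "\<lambda>h. g (x + h, w) - g (x + h, v) - g (x, w) + g (x, v)"
    have box: "dist (y, s) (x, v) < min d1 d2"
      if "y \<in> {min x (x + h)..max x (x + h)}" "s \<in> {min v w..max v w}" "\<bar>h\<bar> < d" for y s h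
      using between_imp_abs_le[OF that(1)] between_imp_abs_le[OF that(2)] that(3) w
      by (intro near) auto
    have inS: "(y, s) \<in> S" if "dist (y, s) (x, v) < min d1 d2" for y s
      using d1 that by (auto simp: dist_commute)
    have second_diff: "\<bar>?\<Delta> h / h - (w - v) * E (x, v)\<bar> \<le> e * \<bar>w - v\<bar>"
      if h: "h \<noteq> 0" "\<bar>h\<bar> < d" for h
    proof -
      obtain y s where ys: "y \<in> {min x (x + h)..max x (x + h)}" "s \<in> {min v w..max v w}"
        and eq: "?\<Delta> h = (x + h - x) * (w - v) * E (y, s)"
        using second_difference_mean_value[of x "x + h" v w g Dv E] box[OF _ _ h(2)] inS dv dvx
        by blast
      have "\<bar>E (y, s) - E (x, v)\<bar> \<le> e"
        using d2(2) box[OF ys h(2)] by force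
      then have "\<bar>w - v\<bar> * \<bar>E (y, s) - E (x, v)\<bar> \<le> \<bar>w - v\<bar> * e"
        by (rule mult_left_mono) simp
      moreover have "?\<Delta> h / h - (w - v) * E (x, v) = (w - v) * (E (y, s) - E (x, v))"
        using eq h(1) by (simp add: field_simps)
      ultimately show ?thesis by (simp add: abs_mult mult.commute)
    qed
    have "((\<lambda>h. (g (x + h, w) - g (x, w)) / h - (g (x + h, v) - g (x, v)) / h)
        \<longlongrightarrow> Dx (x, w) - Dx (x, v)) (at 0)"
      using dx[OF inS[OF near]] dx[OF inS[OF near]] w \<open>d > 0\<close>
      unfolding DERIV_def by (intro tendsto_diff) auto
    moreover have "?\<Delta> h / h = (g (x + h, w) - g (x, w)) / h - (g (x + h, v) - g (x, v)) / h" for h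
      by (simp add: diff_divide_distrib add_divide_distrib)
    ultimately have "((\<lambda>h. \<bar>?\<Delta> h / h - (w - v) * E (x, v)\<bar>)
        \<longlongrightarrow> \<bar>Dx (x, w) - Dx (x, v) - (w - v) * E (x, v)\<bar>) (at 0)"
      by (auto intro!: tendsto_intros)
    moreover have "eventually (\<lambda>h. \<bar>?\<Delta> h / h - (w - v) * E (x, v)\<bar> \<le> e * \<bar>w - v\<bar>) (at 0)"
      unfolding eventually_at using \<open>d > 0\<close> second_diff by (auto intro!: exI[of _ d])
    ultimately have "\<bar>Dx (x, w) - Dx (x, v) - (w - v) * E (x, v)\<bar> \<le> e * \<bar>w - v\<bar>"
      by (rule tendsto_upperbound) simp
    then show "norm (Dx (x, w) - Dx (x, v) - E (x, v) * (w - v)) \<le> e * norm (w - v)"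
      by (simp add: mult.commute)
  qed
qed

section \<open>Functions of class \<open>C\<^sup>3\<close> on a strip\<close>

text \<open>Of the v-derivatives only those of the pure
  v-partials are required; the others follow by Schwarz's theorem.\<close>
definition strip_C3 :: "real \<Rightarrow> real \<Rightarrow> (real \<times> real \<Rightarrow> real) \<Rightarrow> bool" where
  "strip_C3 A B g \<longleftrightarrow>
    (\<forall>p q x v. p + q < 3 \<longrightarrow> A < v \<longrightarrow> v < B \<longrightarrow>
       ((\<lambda>y. mpd p q g (y, v)) has_real_derivative mpd (Suc p) q g (x, v)) (at x)) \<and>
    (\<forall>q x v. q < 3 \<longrightarrow> A < v \<longrightarrow> v < B \<longrightarrow>
       ((\<lambda>w. mpd 0 q g (x, w)) has_real_derivative mpd 0 (Suc q) g (x, v)) (at v)) \<and>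
    (\<forall>p q. p + q \<le> 3 \<longrightarrow> continuous_on (UNIV \<times> {A<..<B}) (mpd p q g))"

lemma strip_C3_has_derivative_x:
  "strip_C3 A B g \<Longrightarrow> p + q < 3 \<Longrightarrow> A < v \<Longrightarrow> v < B \<Longrightarrow>
     ((\<lambda>y. mpd p q g (y, v)) has_real_derivative mpd (Suc p) q g (x, v)) (at x)"
  unfolding strip_C3_def by blast

lemma strip_C3_has_derivative_v0:
  "strip_C3 A B g \<Longrightarrow> q < 3 \<Longrightarrow> A < v \<Longrightarrow> v < B \<Longrightarrow>
     ((\<lambda>w. mpd 0 q g (x, w)) has_real_derivative mpd 0 (Suc q) g (x, v)) (at v)"
  unfolding strip_C3_def by blast

lemma strip_C3_continuous_on:
  "strip_C3 A B g \<Longrightarrow> p + q \<le> 3 \<Longrightarrow> continuous_on (UNIV \<times> {A<..<B}) (mpd p q g)"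
  unfolding strip_C3_def by blast

lemma open_strip: "open (UNIV \<times> {A<..<B} :: (real \<times> real) set)"
  by (intro open_Times) auto

lemma strip_C3_isCont:
  assumes "strip_C3 A B g" "p + q \<le> 3" "A < v" "v < B"
  shows "isCont (mpd p q g) (x, v)"
  using strip_C3_continuous_on[OF assms(1,2)] assms(3,4)
  by (simp add: continuous_on_eq_continuous_at[OF open_strip])

lemma strip_C3_has_derivative_v:
  assumes g: "strip_C3 A B g" and "p + q < 3" "A < v" "v < B"
  shows "((\<lambda>w. mpd p q g (x, w)) has_real_derivative mpd p (Suc q) g (x, v)) (at v)"
  using assms(2-)
proof (induction p arbitrary: q x v)
  case 0
  then show ?case using strip_C3_has_derivative_v0[OF g] by simp
next
  case (Suc p)
  show ?case
  proof (rule has_real_derivative_swap_partials[OF open_strip,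
        where g = "mpd p q g" and Dv = "mpd p (Suc q) g"])
    show "(x, v) \<in> UNIV \<times> {A<..<B}" using Suc.prems by simp
    show "isCont (mpd (Suc p) (Suc q) g) (x, v)"
      using strip_C3_isCont[OF g] Suc.prems by simp
    fix y w :: real assume "(y, w) \<in> UNIV \<times> {A<..<B}"
    then have w: "A < w" "w < B" by auto
    show "((\<lambda>t. mpd p q g (t, w)) has_real_derivative mpd (Suc p) q g (y, w)) (at y)"
      using strip_C3_has_derivative_x[OF g _ w] Suc.prems by simp
    show "((\<lambda>s. mpd p q g (y, s)) has_real_derivative mpd p (Suc q) g (y, w)) (at w)"
      using Suc.IH[OF _ w] Suc.prems by simp
    show "((\<lambda>t. mpd p (Suc q) g (t, w)) has_real_derivative mpd (Suc p) (Suc q) g (y, w)) (at y)"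
      using strip_C3_has_derivative_x[OF g _ w] Suc.prems by simp
  qed
qed

lemma strip_C3_imp_C3_on2:
  assumes g: "strip_C3 A B g"
  shows "C3_on2 (UNIV \<times> {A<..<B}) g"
  unfolding C3_on2_def
proof (intro conjI allI impI ballI)
  fix p q :: nat and z :: "real \<times> real"
  assume pq: "p + q < 3" and z: "z \<in> UNIV \<times> {A<..<B}"
  obtain x v where z_eq: "z = (x, v)" and v: "A < v" "v < B"
    using z by auto
  have "(mpd p q g has_derivative (\<lambda>(h, k). h * mpd (Suc p) q g (x, v) + k * mpd p (Suc q) g (x, v)))
      (at (x, v))"
  proof (rule has_derivative_of_partials[OF open_strip])
    show "(x, v) \<in> UNIV \<times> {A<..<B}" using v by simp
    show "((\<lambda>t. mpd p q g (t, w)) has_real_derivative mpd (Suc p) q g (y, w)) (at y)"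
      if "(y, w) \<in> UNIV \<times> {A<..<B}" for y w :: real
      using strip_C3_has_derivative_x[OF g pq] that by simp
    show "isCont (mpd (Suc p) q g) (x, v)"
      using strip_C3_isCont[OF g _ v] pq by simp
    show "((\<lambda>w. mpd p q g (x, w)) has_real_derivative mpd p (Suc q) g (x, v)) (at v)"
      using strip_C3_has_derivative_v[OF g pq v] .
  qed
  then show "mpd p q g differentiable at z"
    unfolding z_eq differentiable_def by blast
qed (rule strip_C3_continuous_on[OF g])

lemma strip_C3_Lipschitz:
  assumes g: "strip_C3 A B g" and ab: "A < a" "b < B"
  obtains L where "L \<ge> 0" "\<And>u1 u2 v1 v2. u1 \<in> {-M..M} \<Longrightarrow> u2 \<in> {-M..M} \<Longrightarrow>
      v1 \<in> {a..b} \<Longrightarrow> v2 \<in> {a..b} \<Longrightarrow>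
      \<bar>g (u1, v1) - g (u2, v2)\<bar> \<le> L * (\<bar>u1 - u2\<bar> + \<bar>v1 - v2\<bar>)"
proof -
  let ?K = "{-M..M} \<times> {a..b}"
  have K: "compact ?K" "?K \<subseteq> UNIV \<times> {A<..<B}"
    using ab by (auto intro: compact_Times)
  have cont: "continuous_on ?K (mpd 1 0 g)" "continuous_on ?K (mpd 0 1 g)"
    using continuous_on_subset[OF strip_C3_continuous_on[OF g] K(2)] by simp_all
  obtain L1 where L1: "L1 \<ge> 0" "\<And>z. z \<in> ?K \<Longrightarrow> \<bar>mpd 1 0 g z\<bar> \<le> L1"
    using continuous_on_compact_bound[OF K(1) cont(1)] by (metis real_norm_def)
  obtain L2 where L2: "\<And>z. z \<in> ?K \<Longrightarrow> \<bar>mpd 0 1 g z\<bar> \<le> L2"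
    using continuous_on_compact_bound[OF K(1) cont(2)] by (metis real_norm_def)
  show ?thesis
  proof (rule that[of "max L1 L2"])
    show "max L1 L2 \<ge> 0" using L1(1) by simp
    fix u1 u2 v1 v2
    assume u: "u1 \<in> {-M..M}" "u2 \<in> {-M..M}" and v: "v1 \<in> {a..b}" "v2 \<in> {a..b}"
    have v_strip: "A < s" "s < B" if "s \<in> {min v2 v1..max v2 v1}" for s
      using that v ab by (auto simp: min_def max_def split: if_splits)
    have "\<exists>t\<in>{min u2 u1..max u2 u1}. g (u1, v1) - g (u2, v1) = (u1 - u2) * mpd 1 0 g (t, v1)"
    proof (rule mean_value_between)
      fix t
      have "A < v1" "v1 < B" using v ab by auto
      then show "((\<lambda>y. g (y, v1)) has_real_derivative mpd 1 0 g (t, v1)) (at t)"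
        using strip_C3_has_derivative_x[OF g, of 0 0 v1 t] by simp
    qed
    then obtain t where t: "t \<in> {min u2 u1..max u2 u1}"
      "g (u1, v1) - g (u2, v1) = (u1 - u2) * mpd 1 0 g (t, v1)"
      by blast
    have "\<exists>s\<in>{min v2 v1..max v2 v1}. g (u2, v1) - g (u2, v2) = (v1 - v2) * mpd 0 1 g (u2, s)"
    proof (rule mean_value_between)
      fix s assume "s \<in> {min v2 v1..max v2 v1}"
      then show "((\<lambda>w. g (u2, w)) has_real_derivative mpd 0 1 g (u2, s)) (at s)"
        using strip_C3_has_derivative_v0[OF g, of 0 s u2] v_strip by simp
    qed
    then obtain s where s: "s \<in> {min v2 v1..max v2 v1}"
      "g (u2, v1) - g (u2, v2) = (v1 - v2) * mpd 0 1 g (u2, s)"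
      by blast
    have "(t, v1) \<in> ?K" "(u2, s) \<in> ?K"
      using t(1) s(1) u v by (auto simp: min_def max_def split: if_splits)
    then have "\<bar>mpd 1 0 g (t, v1)\<bar> \<le> max L1 L2" "\<bar>mpd 0 1 g (u2, s)\<bar> \<le> max L1 L2"
      using L1(2) L2 by (simp_all add: le_max_iff_disj)
    then have "\<bar>g (u1, v1) - g (u2, v1)\<bar> \<le> \<bar>u1 - u2\<bar> * max L1 L2"
      and "\<bar>g (u2, v1) - g (u2, v2)\<bar> \<le> \<bar>v1 - v2\<bar> * max L1 L2"
      unfolding t(2) s(2) abs_mult by (auto intro: mult_left_mono)
    then show "\<bar>g (u1, v1) - g (u2, v2)\<bar> \<le> max L1 L2 * (\<bar>u1 - u2\<bar> + \<bar>v1 - v2\<bar>)"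
      using abs_triangle_ineq[of "g (u1, v1) - g (u2, v1)" "g (u2, v1) - g (u2, v2)"]
      by (simp add: algebra_simps)
  qed
qed

lemma Lipschitz_bdd_difference_quotients:
  fixes g :: "real \<times> real \<Rightarrow> real"
  assumes L: "L \<ge> 0" "\<And>u1 u2 v1 v2. u1 \<in> U \<Longrightarrow> u2 \<in> U \<Longrightarrow> v1 \<in> V \<Longrightarrow> v2 \<in> V \<Longrightarrow>
      \<bar>g (u1, v1) - g (u2, v2)\<bar> \<le> L * (\<bar>u1 - u2\<bar> + \<bar>v1 - v2\<bar>)"
  shows "bdd_above {\<bar>g (u1, v1) - g (u2, v2)\<bar> / (\<bar>u1 - u2\<bar> + \<bar>v1 - v2\<bar>)
                    | u1 u2 v1 v2. u1 \<in> U \<and> u2 \<in> U \<and> v1 \<in> V \<and> v2 \<in> V}"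
    and "bdd_above {\<bar>g (u1, v) - g (u2, v)\<bar> / \<bar>u1 - u2\<bar> | u1 u2 v. u1 \<in> U \<and> u2 \<in> U \<and> v \<in> V}"
proof -
  have quotient_le: "n / d \<le> L" if "n \<le> L * d" "0 \<le> n" "0 \<le> d" for n d :: real
    using that L(1) by (cases "d = 0") (auto simp: divide_le_eq mult.commute)
  show "bdd_above {\<bar>g (u1, v1) - g (u2, v2)\<bar> / (\<bar>u1 - u2\<bar> + \<bar>v1 - v2\<bar>)
                    | u1 u2 v1 v2. u1 \<in> U \<and> u2 \<in> U \<and> v1 \<in> V \<and> v2 \<in> V}"
    by (rule bdd_aboveI[of _ L]) (force intro: quotient_le L(2))
  show "bdd_above {\<bar>g (u1, v) - g (u2, v)\<bar> / \<bar>u1 - u2\<bar> | u1 u2 v. u1 \<in> U \<and> u2 \<in> U \<and> v \<in> V}"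
    using L(2)[of _ _ v v for v] by (intro bdd_aboveI[of _ L]) (force intro: quotient_le)
qed

lemma strip_C3_bdd_difference_quotients:
  assumes "strip_C3 A B g" "A < a" "b < B"
  shows "bdd_above {\<bar>g (u1, v1) - g (u2, v2)\<bar> / (\<bar>u1 - u2\<bar> + \<bar>v1 - v2\<bar>)
                    | u1 u2 v1 v2. u1 \<in> {-M..M} \<and> u2 \<in> {-M..M} \<and> v1 \<in> {a..b} \<and> v2 \<in> {a..b}}"
    and "bdd_above {\<bar>g (u1, v) - g (u2, v)\<bar> / \<bar>u1 - u2\<bar> | u1 u2 v. u1 \<in> {-M..M} \<and> u2 \<in> {-M..M} \<and> v \<in> {a..b}}"
proof -
  obtain L where L: "L \<ge> 0" "\<And>u1 u2 v1 v2. u1 \<in> {-M..M} \<Longrightarrow> u2 \<in> {-M..M} \<Longrightarrow>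
      v1 \<in> {a..b} \<Longrightarrow> v2 \<in> {a..b} \<Longrightarrow> \<bar>g (u1, v1) - g (u2, v2)\<bar> \<le> L * (\<bar>u1 - u2\<bar> + \<bar>v1 - v2\<bar>)"
    using strip_C3_Lipschitz[OF assms, where M = M] by blast
  show "bdd_above {\<bar>g (u1, v1) - g (u2, v2)\<bar> / (\<bar>u1 - u2\<bar> + \<bar>v1 - v2\<bar>)
                    | u1 u2 v1 v2. u1 \<in> {-M..M} \<and> u2 \<in> {-M..M} \<and> v1 \<in> {a..b} \<and> v2 \<in> {a..b}}"
    by (rule Lipschitz_bdd_difference_quotients(1)[OF L])
  show "bdd_above {\<bar>g (u1, v) - g (u2, v)\<bar> / \<bar>u1 - u2\<bar> | u1 u2 v. u1 \<in> {-M..M} \<and> u2 \<in> {-M..M} \<and> v \<in> {a..b}}"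
    by (rule Lipschitz_bdd_difference_quotients(2)[OF L])
qed

section \<open>Term-by-term differentiation\<close>

context
  fixes A B :: real and D :: "nat \<Rightarrow> nat \<Rightarrow> real \<times> real \<Rightarrow> real" and f :: "real \<times> real \<Rightarrow> real"
  assumes family_dx: "\<And>p q x v. p + q < 3 \<Longrightarrow> A < v \<Longrightarrow> v < B \<Longrightarrow>
      ((\<lambda>y. D p q (y, v)) has_real_derivative D (Suc p) q (x, v)) (at x)"
    and family_dv: "\<And>q x v. q < 3 \<Longrightarrow> A < v \<Longrightarrow> v < B \<Longrightarrow>
      ((\<lambda>w. D 0 q (x, w)) has_real_derivative D 0 (Suc q) (x, v)) (at v)"
    and family_cont: "\<And>p q. p + q \<le> 3 \<Longrightarrow> continuous_on (UNIV \<times> {A<..<B}) (D p q)"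
    and family_0_0: "\<And>x v. A < v \<Longrightarrow> v < B \<Longrightarrow> f (x, v) = D 0 0 (x, v)"
begin

lemma mpd_0_eq_family: "q \<le> 3 \<Longrightarrow> A < v \<Longrightarrow> v < B \<Longrightarrow> mpd 0 q f (x, v) = D 0 q (x, v)"
proof (induction q arbitrary: v)
  case 0
  then show ?case using family_0_0 by simp
next
  case (Suc q)
  have "mpd 0 (Suc q) f (x, v) = deriv (\<lambda>w. mpd 0 q f (x, w)) v"
    by (simp add: mpd_0_Suc pdv_def)
  also have "\<dots> = deriv (\<lambda>w. D 0 q (x, w)) v"
  proof (rule deriv_cong_ev[OF _ refl])
    have "eventually (\<lambda>w. w \<in> {A<..<B}) (nhds v)"
      using Suc.prems by (intro eventually_nhds_in_open) auto
    then show "\<forall>\<^sub>F w in nhds v. mpd 0 q f (x, w) = D 0 q (x, w)"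
      by eventually_elim (use Suc in auto)
  qed
  also have "\<dots> = D 0 (Suc q) (x, v)"
    using family_dv[of q v x] Suc.prems by (intro DERIV_imp_deriv) simp
  finally show ?case .
qed

lemma mpd_eq_family: "p + q \<le> 3 \<Longrightarrow> A < v \<Longrightarrow> v < B \<Longrightarrow> mpd p q f (x, v) = D p q (x, v)"
proof (induction p arbitrary: x)
  case 0
  then show ?case using mpd_0_eq_family by simp
next
  case (Suc p)
  have "mpd (Suc p) q f (x, v) = deriv (\<lambda>y. mpd p q f (y, v)) x"
    by (simp add: mpd_Suc_left pdx_def)
  also have "(\<lambda>y. mpd p q f (y, v)) = (\<lambda>y. D p q (y, v))"
    using Suc by simp
  also have "deriv (\<lambda>y. D p q (y, v)) x = D (Suc p) q (x, v)"
    using family_dx[of p q v x] Suc.prems by (intro DERIV_imp_deriv) simp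
  finally show ?case .
qed

lemma strip_C3_family: "strip_C3 A B f"
  unfolding strip_C3_def
proof (intro conjI allI impI)
  fix p q :: nat and x v :: real assume pq: "p + q < 3" and v: "A < v" "v < B"
  have "(\<lambda>y. mpd p q f (y, v)) = (\<lambda>y. D p q (y, v))"
    using mpd_eq_family pq v by simp
  then show "((\<lambda>y. mpd p q f (y, v)) has_real_derivative mpd (Suc p) q f (x, v)) (at x)"
    using family_dx[OF pq v] mpd_eq_family[of "Suc p" q v x] pq v by simp
next
  fix q :: nat and x v :: real assume q: "q < 3" and v: "A < v" "v < B"
  have "((\<lambda>w. D 0 q (x, w)) has_real_derivative mpd 0 (Suc q) f (x, v)) (at v)"
    using family_dv[OF q v] mpd_eq_family[of 0 "Suc q" v x] q v by simp
  then show "((\<lambda>w. mpd 0 q f (x, w)) has_real_derivative mpd 0 (Suc q) f (x, v)) (at v)"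
    by (rule has_field_derivative_transform_within_open[where S = "{A<..<B}"])
      (use v mpd_eq_family[of 0 q] q in auto)
next
  fix p q :: nat assume pq: "p + q \<le> 3"
  show "continuous_on (UNIV \<times> {A<..<B}) (mpd p q f)"
    by (rule continuous_on_eq[OF family_cont[OF pq]]) (use pq in \<open>auto simp: mpd_eq_family\<close>)
qed

end

lemma has_real_derivative_suminf_bounded:
  fixes f f' :: "nat \<Rightarrow> real \<Rightarrow> real"
  assumes x: "a < x" "x < b"
    and f': "\<And>n t. t \<in> {a..b} \<Longrightarrow> (f n has_real_derivative f' n t) (at t)"
    and Bd: "summable Bd" "\<And>n. \<bar>f n x\<bar> \<le> Bd n" "\<And>n t. t \<in> {a..b} \<Longrightarrow> \<bar>f' n t\<bar> \<le> Bd n"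
  shows "((\<lambda>t. \<Sum>n. f n t) has_real_derivative (\<Sum>n. f' n x)) (at x)"
proof (rule has_field_derivative_series'(2))
  show "convex {a..b}" by simp
  show "(f n has_real_derivative f' n t) (at t within {a..b})" if "t \<in> {a..b}" for n t
    using f'[OF that] by (rule has_field_derivative_at_within)
  show "uniformly_convergent_on {a..b} (\<lambda>n t. \<Sum>i<n. f' i t)"
    using Bd(1,3) by (intro Weierstrass_m_test') auto
  show "x \<in> {a..b}" "x \<in> interior {a..b}" using x by auto
  show "summable (\<lambda>n. f n x)"
    using Bd(1,2) by (intro summable_comparison_test[OF _ Bd(1)]) auto
qed

context
  fixes A B :: real and g :: "nat \<Rightarrow> real \<times> real \<Rightarrow> real"
  assumes g_C3: "\<And>m. strip_C3 A B (g m)"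
    and g_bound: "\<And>M a b. A < a \<Longrightarrow> a \<le> b \<Longrightarrow> b < B \<Longrightarrow> \<exists>Bd. summable Bd \<and>
        (\<forall>m p q u v. p + q \<le> 3 \<longrightarrow> \<bar>u\<bar> \<le> M \<longrightarrow> a \<le> v \<longrightarrow> v \<le> b \<longrightarrow> \<bar>mpd p q (g m) (u, v)\<bar> \<le> Bd m)"
begin

lemma suminf_has_derivative_x:
  assumes pq: "p + q < 3" and v: "A < v" "v < B"
  shows "((\<lambda>y. \<Sum>m. mpd p q (g m) (y, v)) has_real_derivative (\<Sum>m. mpd (Suc p) q (g m) (x, v))) (at x)"
proof -
  obtain Bd where Bd: "summable Bd" "\<And>m p q u. p + q \<le> 3 \<Longrightarrow> \<bar>u\<bar> \<le> \<bar>x\<bar> + 1 \<Longrightarrow>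
      \<bar>mpd p q (g m) (u, v)\<bar> \<le> Bd m"
    using g_bound[of v v "\<bar>x\<bar> + 1"] v by fastforce
  show ?thesis
  proof (rule has_real_derivative_suminf_bounded[OF _ _ _ Bd(1)])
    show "x - 1 < x" "x < x + 1" by simp_all
    show "((\<lambda>y. mpd p q (g m) (y, v)) has_real_derivative mpd (Suc p) q (g m) (t, v)) (at t)" for m t
      using strip_C3_has_derivative_x[OF g_C3 pq v] .
    show "\<bar>mpd p q (g m) (x, v)\<bar> \<le> Bd m" for m
      using Bd(2) pq by simp
    show "\<bar>mpd (Suc p) q (g m) (t, v)\<bar> \<le> Bd m" if "t \<in> {x - 1..x + 1}" for m t
      using that pq by (intro Bd(2)) (auto simp: abs_le_iff)
  qed
qed

lemma suminf_has_derivative_v: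
  assumes q: "q < 3" and v: "A < v" "v < B"
  shows "((\<lambda>w. \<Sum>m. mpd 0 q (g m) (x, w)) has_real_derivative (\<Sum>m. mpd 0 (Suc q) (g m) (x, v))) (at v)"
proof -
  define a b where "a = (A + v) / 2" and "b = (v + B) / 2"
  have ab: "A < a" "a < v" "v < b" "b < B" using v by (auto simp: a_def b_def)
  obtain Bd where Bd: "summable Bd" "\<And>m p q w. p + q \<le> 3 \<Longrightarrow> a \<le> w \<Longrightarrow> w \<le> b \<Longrightarrow>
      \<bar>mpd p q (g m) (x, w)\<bar> \<le> Bd m"
    using g_bound[of a b "\<bar>x\<bar>"] ab by fastforce
  show ?thesis
  proof (rule has_real_derivative_suminf_bounded[OF ab(2,3) _ Bd(1)])
    show "((\<lambda>w. mpd 0 q (g m) (x, w)) has_real_derivative mpd 0 (Suc q) (g m) (x, t)) (at t)"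
      if "t \<in> {a..b}" for m t
      using strip_C3_has_derivative_v0[OF g_C3 q] that ab by simp
    show "\<bar>mpd 0 q (g m) (x, v)\<bar> \<le> Bd m" for m
      using Bd(2) q ab by simp
    show "\<bar>mpd 0 (Suc q) (g m) (x, t)\<bar> \<le> Bd m" if "t \<in> {a..b}" for m t
      using Bd(2) q that by simp
  qed
qed

lemma suminf_continuous_on:
  assumes pq: "p + q \<le> 3"
  shows "continuous_on (UNIV \<times> {A<..<B}) (\<lambda>z. \<Sum>m. mpd p q (g m) z)"
proof -
  define box :: "real \<times> real \<times> real \<Rightarrow> (real \<times> real) set"
    where "box = (\<lambda>(M, a, b). {-M<..<M} \<times> {a<..<b})"
  define I :: "(real \<times> real \<times> real) set" where "I = {(M, a, b). 0 < M \<and> A < a \<and> a < b \<and> b < B}"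
  have "continuous_on (\<Union>i\<in>I. box i) (\<lambda>z. \<Sum>m. mpd p q (g m) z)"
  proof (rule continuous_on_open_UN)
    fix i assume "i \<in> I"
    then obtain M a b where i: "i = (M, a, b)" and Mab: "0 < M" "A < a" "a < b" "b < B"
      by (auto simp: I_def)
    then have box_i: "box i = {-M<..<M} \<times> {a<..<b}" by (simp add: box_def)
    show "open (box i)" unfolding box_i by (auto intro!: open_Times)
    obtain Bd where Bd: "summable Bd" "\<And>m u v. \<bar>u\<bar> \<le> M \<Longrightarrow> a \<le> v \<Longrightarrow> v \<le> b \<Longrightarrow>
        \<bar>mpd p q (g m) (u, v)\<bar> \<le> Bd m"
      using g_bound[of a b M] Mab pq by fastforce
    have "uniform_limit (box i) (\<lambda>n z. \<Sum>m<n. mpd p q (g m) z) (\<lambda>z. \<Sum>m. mpd p q (g m) z) sequentially"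
      using Bd unfolding box_i by (intro Weierstrass_m_test) auto
    moreover have "continuous_on (box i) (\<lambda>z. \<Sum>m<n. mpd p q (g m) z)" for n
      using Mab unfolding box_i
      by (intro continuous_on_sum continuous_on_subset[OF strip_C3_continuous_on[OF g_C3 pq]]) auto
    ultimately show "continuous_on (box i) (\<lambda>z. \<Sum>m. mpd p q (g m) z)"
      by (intro uniform_limit_theorem) auto
  qed
  moreover have "(\<Union>i\<in>I. box i) = UNIV \<times> {A<..<B}"
  proof (intro equalityI subsetI)
    fix z assume "z \<in> (\<Union>i\<in>I. box i)"
    then show "z \<in> UNIV \<times> {A<..<B}" by (force simp: I_def box_def)
  next
    fix z :: "real \<times> real" assume "z \<in> UNIV \<times> {A<..<B}"
    then obtain u w where z: "z = (u, w)" "A < w" "w < B" by auto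
    then have "z \<in> box (\<bar>u\<bar> + 1, (A + w) / 2, (w + B) / 2)" "(\<bar>u\<bar> + 1, (A + w) / 2, (w + B) / 2) \<in> I"
      by (auto simp: box_def I_def)
    then show "z \<in> (\<Union>i\<in>I. box i)" by blast
  qed
  ultimately show ?thesis by simp
qed

lemma strip_C3_suminf:
  assumes "\<And>u v. A < v \<Longrightarrow> v < B \<Longrightarrow> F (u, v) = (\<Sum>m. g m (u, v))"
  shows "strip_C3 A B F"
  by (rule strip_C3_family[where D = "\<lambda>p q z. \<Sum>m. mpd p q (g m) z"])
    (use assms suminf_has_derivative_x suminf_has_derivative_v suminf_continuous_on in auto)

end

section \<open>Summability\<close>

lemma summable_powr_mult_geometric:
  fixes c s \<rho> :: real
  assumes "0 < \<rho>" "\<rho> < 1"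
  shows "summable (\<lambda>n. (real n + c) powr s * \<rho> ^ n)"
proof (rule summable_comparison_test_bigo)
  show "summable (\<lambda>n. norm (real n powr (-2)))"
    by (simp add: summable_real_powr_iff)
  show "(\<lambda>n. (real n + c) powr s * \<rho> ^ n) \<in> O(\<lambda>n. real n powr (-2))"
    using assms by real_asymp
qed

lemma summable_shifted_powr:
  fixes c s :: real
  assumes "s < -1"
  shows "summable (\<lambda>n. (c + real n) powr s)"
proof (rule summable_comparison_test_bigo)
  show "summable (\<lambda>n. norm (real n powr s))"
    using assms by (simp add: summable_real_powr_iff)
  show "(\<lambda>n. (c + real n) powr s) \<in> O(\<lambda>n. real n powr s)"
    by real_asymp
qed

lemma summable_on_int_abs:
  fixes h :: "real \<Rightarrow> real"
  assumes "summable (\<lambda>n. h (real n))" "\<And>n. 0 \<le> h (real n)"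
  shows "(\<lambda>k::int. h \<bar>real_of_int k\<bar>) summable_on UNIV"
proof -
  have nat: "(\<lambda>n. h (real n)) summable_on UNIV"
    using assms by (rule summable_nonneg_imp_summable_on)
  have "(\<lambda>k::int. h \<bar>real_of_int k\<bar>) summable_on range int"
    using nat by (subst summable_on_reindex) (auto simp: inj_on_def o_def)
  moreover have "(\<lambda>k::int. h \<bar>real_of_int k\<bar>) summable_on range (\<lambda>n. - int n)"
    using nat by (subst summable_on_reindex) (auto simp: inj_on_def o_def)
  moreover have "range int \<union> range (\<lambda>n. - int n) = UNIV"
  proof (intro equalityI subsetI)
    fix k :: int
    show "k \<in> range int \<union> range (\<lambda>n. - int n)"
      by (cases "k \<ge> 0") (auto intro!: image_eqI[of _ _ "nat \<bar>k\<bar>"])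
  qed simp
  ultimately show ?thesis
    by (metis summable_on_union)
qed

lemma summable_on_product_nonneg:
  fixes a :: "nat \<Rightarrow> real" and b :: "'a \<Rightarrow> real"
  assumes a: "summable a" "\<And>n. 0 \<le> a n" and b: "b summable_on UNIV" "\<And>k. 0 \<le> b k"
  shows "(\<lambda>(n, k). a n * b k) summable_on UNIV"
proof -
  have "(\<lambda>(n, k). a n * b k) summable_on UNIV \<times> UNIV"
  proof (rule summable_on_SigmaI[where g = "\<lambda>n. a n * infsum b UNIV"])
    show "((\<lambda>k. case (n, k) of (n, k) \<Rightarrow> a n * b k) has_sum a n * infsum b UNIV) UNIV" for n
      using has_sum_cmult_right[OF has_sum_infsum[OF b(1)], of "a n"] by simp
    show "(\<lambda>n. a n * infsum b UNIV) summable_on UNIV"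
      using a by (intro summable_on_cmult_left summable_nonneg_imp_summable_on)
  qed (use a b in simp)
  then show ?thesis by simp
qed

lemma abs_binomial_sum_le:
  fixes c B :: real and T :: "nat \<Rightarrow> real"
  assumes "0 \<le> c" "\<And>i. i \<le> q \<Longrightarrow> \<bar>T i\<bar> \<le> B"
  shows "\<bar>\<Sum>i\<le>q. real (q choose i) * c ^ (q - i) * T i\<bar> \<le> (1 + c) ^ q * B"
proof -
  have "\<bar>\<Sum>i\<le>q. real (q choose i) * c ^ (q - i) * T i\<bar> \<le> (\<Sum>i\<le>q. real (q choose i) * c ^ (q - i) * B)"
    using assms by (intro order_trans[OF sum_abs sum_mono]) (auto simp: abs_mult intro: mult_left_mono)
  also have "\<dots> = (1 + c) ^ q * B"
    by (simp add: binomial_ring[of 1 c q] sum_distrib_right)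
  finally show ?thesis .
qed

lemma binomial_Leibniz_step:
  fixes c :: real and T :: "nat \<Rightarrow> real"
  shows "c * (\<Sum>i\<le>q. real (q choose i) * c ^ (q - i) * T i)
           + (\<Sum>i\<le>q. real (q choose i) * c ^ (q - i) * T (Suc i))
         = (\<Sum>i\<le>Suc q. real (Suc q choose i) * c ^ (Suc q - i) * T i)"
proof -
  have "c * (\<Sum>i\<le>q. real (q choose i) * c ^ (q - i) * T i)
      = (\<Sum>i\<le>Suc q. real (q choose i) * c ^ (Suc q - i) * T i)"
    by (simp add: sum_distrib_left Suc_diff_le mult_ac)
  also have "\<dots> = c ^ Suc q * T 0 + (\<Sum>i\<le>q. real (q choose Suc i) * c ^ (q - i) * T (Suc i))"
    by (subst sum.atMost_Suc_shift) simp
  finally show ?thesis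
    by (simp only: sum.atMost_Suc_shift[of _ q] binomial_Suc_Suc) (simp add: sum.distrib algebra_simps)
qed

lemma powr_div_power_eq_power:
  "2 powr (real m * b) / 2 ^ m = (2 powr (b - 1)) ^ m"
proof -
  have "2 powr (real m * b) / 2 ^ m = 2 powr (real m * b) / 2 powr real m"
    by (simp add: powr_realpow)
  also have "\<dots> = (2 powr (b - 1)) powr real m"
    by (simp add: powr_powr powr_diff[symmetric] algebra_simps)
  finally show ?thesis by (simp add: powr_realpow)
qed

lemma abs_le_decay_shift:
  fixes t s M y K :: real
  assumes "(3 + \<bar>t\<bar>)\<^sup>2 * \<bar>y\<bar> \<le> K" "\<bar>t - s\<bar> \<le> M" "0 \<le> M"
  shows "\<bar>y\<bar> \<le> K * (1 + M)\<^sup>2 / (3 + \<bar>s\<bar>)\<^sup>2"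
proof -
  have "\<bar>s\<bar> \<le> \<bar>t\<bar> + M" "0 \<le> M * \<bar>t\<bar>"
    using assms(2,3) by auto
  moreover have "(1 + M) * (3 + \<bar>t\<bar>) = 3 + \<bar>t\<bar> + 3 * M + M * \<bar>t\<bar>"
    by (simp add: algebra_simps)
  ultimately have "3 + \<bar>s\<bar> \<le> (1 + M) * (3 + \<bar>t\<bar>)"
    using assms(3) by linarith
  then have "(3 + \<bar>s\<bar>)\<^sup>2 * \<bar>y\<bar> \<le> ((1 + M) * (3 + \<bar>t\<bar>))\<^sup>2 * \<bar>y\<bar>"
    by (intro mult_right_mono power_mono) auto
  also have "\<dots> = (1 + M)\<^sup>2 * ((3 + \<bar>t\<bar>)\<^sup>2 * \<bar>y\<bar>)"
    by (simp add: power_mult_distrib)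
  also have "\<dots> \<le> (1 + M)\<^sup>2 * K"
    using assms(1) by (intro mult_left_mono) auto
  finally show ?thesis
    by (simp add: pos_le_divide_eq add_pos_nonneg mult.commute)
qed

section \<open>The low-frequency series\<close>

text \<open>\<open>Xdot\<close> with a general kernel \<open>\<Phi>\<close> in place of \<open>\<Psi>\<close>, on the strip \<open>UNIV \<times> {A<..<1}\<close>.  The almost
  sure bound on the \<open>eps j k\<close> enters only through a growth exponent \<open>r < 1\<close> (in the theorem
  \<open>r = 1/\<alpha> + \<eta>\<close> for a small \<open>\<eta> > 0\<close>).\<close>
locale lowfreq_series =
  fixes A :: real and \<Phi> :: "real \<times> real \<Rightarrow> real" and eps :: "int \<Rightarrow> int \<Rightarrow> real" and C r :: real
  assumes \<Phi>_dx: "\<And>p q x v. p < 3 \<Longrightarrow> A < v \<Longrightarrow> v < 1 \<Longrightarrow>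
      ((\<lambda>y. mpd p q \<Phi> (y, v)) has_real_derivative mpd (Suc p) q \<Phi> (x, v)) (at x)"
    and \<Phi>_dv: "\<And>q x v. A < v \<Longrightarrow> v < 1 \<Longrightarrow>
      ((\<lambda>w. mpd 0 q \<Phi> (x, w)) has_real_derivative mpd 0 (Suc q) \<Phi> (x, v)) (at v)"
    and \<Phi>_cont: "\<And>p q. p \<le> 3 \<Longrightarrow> continuous_on (UNIV \<times> {A<..<1}) (mpd p q \<Phi>)"
    and \<Phi>_decay: "\<And>p q a b. p \<le> 3 \<Longrightarrow> A < a \<Longrightarrow> a \<le> b \<Longrightarrow> b < 1 \<Longrightarrow>
      \<exists>K. \<forall>x. \<forall>v\<in>{a..b}. (3 + \<bar>x\<bar>)\<^sup>2 * \<bar>mpd p q \<Phi> (x, v)\<bar> \<le> K"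
    and eps_growth: "\<And>j k. \<bar>eps j k\<bar> \<le> C * (3 + \<bar>real_of_int j\<bar>) powr r * (3 + \<bar>real_of_int k\<bar>) powr r"
    and r_less_1: "r < 1"
begin

definition lowfreq_term :: "nat \<Rightarrow> int \<Rightarrow> real \<times> real \<Rightarrow> real" where
  "lowfreq_term n k = (\<lambda>(u, v). 2 powr (real (Suc n) * v) * eps (- int (Suc n)) k *
     (\<Phi> (u / 2 ^ Suc n - real_of_int k, v) - \<Phi> (- real_of_int k, v)))"

definition increment_partial :: "nat \<Rightarrow> nat \<Rightarrow> nat \<Rightarrow> int \<Rightarrow> real \<times> real \<Rightarrow> real" where
  "increment_partial p i n k z =
     (1 / 2 ^ Suc n) ^ p * mpd p i \<Phi> (fst z / 2 ^ Suc n - real_of_int k, snd z)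
     - (if p = 0 then mpd 0 i \<Phi> (- real_of_int k, snd z) else 0)"

text \<open>Leibniz's rule for \<open>\<partial>\<^sub>x\<^sup>p \<partial>\<^sub>v\<^sup>q\<close> of \<open>lowfreq_term n k\<close>: each \<open>\<partial>\<^sub>v\<close> falls either on \<open>2\<^sup>j\<^sup>v\<close>,
  contributing \<open>j ln 2\<close>, or on the increment of \<open>\<Phi>\<close>.\<close>
definition term_partial :: "nat \<Rightarrow> nat \<Rightarrow> nat \<Rightarrow> int \<Rightarrow> real \<times> real \<Rightarrow> real" where
  "term_partial p q n k z = 2 powr (real (Suc n) * snd z) * eps (- int (Suc n)) k *
     (\<Sum>i\<le>q. real (q choose i) * (real (Suc n) * ln 2) ^ (q - i) * increment_partial p i n k z)"

lemma term_partial_0_0: "term_partial 0 0 n k = lowfreq_term n k"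
  by (auto simp: term_partial_def increment_partial_def lowfreq_term_def fun_eq_iff)

lemma increment_partial_has_derivative_x:
  assumes "p < 3" "A < v" "v < 1"
  shows "((\<lambda>y. increment_partial p i n k (y, v)) has_real_derivative increment_partial (Suc p) i n k (x, v)) (at x)"
proof -
  have "((\<lambda>y. mpd p i \<Phi> (y / 2 ^ Suc n - real_of_int k, v)) has_real_derivative
      mpd (Suc p) i \<Phi> (x / 2 ^ Suc n - real_of_int k, v) * (1 / 2 ^ Suc n)) (at x)"
    by (rule DERIV_chain2[OF \<Phi>_dx[OF assms]]) (auto intro!: derivative_eq_intros)
  then have "((\<lambda>y. (1 / 2 ^ Suc n) ^ p * mpd p i \<Phi> (y / 2 ^ Suc n - real_of_int k, v)
      - (if p = 0 then mpd 0 i \<Phi> (- real_of_int k, v) else 0)) has_real_derivative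
      (1 / 2 ^ Suc n) ^ p * (mpd (Suc p) i \<Phi> (x / 2 ^ Suc n - real_of_int k, v) * (1 / 2 ^ Suc n)) - 0) (at x)"
    by (intro DERIV_diff DERIV_cmult DERIV_const)
  then show ?thesis by (simp add: increment_partial_def mult_ac cong: if_cong)
qed

lemma increment_partial_has_derivative_v:
  assumes "A < v" "v < 1"
  shows "((\<lambda>w. increment_partial 0 i n k (x, w)) has_real_derivative increment_partial 0 (Suc i) n k (x, v)) (at v)"
  unfolding increment_partial_def using assms by (auto intro!: DERIV_diff \<Phi>_dv)

lemma term_partial_has_derivative_x:
  assumes "p < 3" "A < v" "v < 1"
  shows "((\<lambda>y. term_partial p q n k (y, v)) has_real_derivative term_partial (Suc p) q n k (x, v)) (at x)"
  unfolding term_partial_def snd_conv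
  by (intro DERIV_cmult DERIV_sum increment_partial_has_derivative_x assms)

lemma term_partial_has_derivative_v:
  assumes "A < v" "v < 1"
  shows "((\<lambda>w. term_partial 0 q n k (x, w)) has_real_derivative term_partial 0 (Suc q) n k (x, v)) (at v)"
proof -
  define c where "c = real (Suc n) * ln 2"
  define e where "e = eps (- int (Suc n)) k"
  define S where "S T = (\<Sum>i\<le>q. real (q choose i) * c ^ (q - i) * T i)" for T :: "nat \<Rightarrow> real"
  have "2 powr (real (Suc n) * v) * c * (e * S (\<lambda>i. increment_partial 0 i n k (x, v)))
        + e * S (\<lambda>i. increment_partial 0 (Suc i) n k (x, v)) * 2 powr (real (Suc n) * v)
      = 2 powr (real (Suc n) * v) * e *
        (c * S (\<lambda>i. increment_partial 0 i n k (x, v)) + S (\<lambda>i. increment_partial 0 (Suc i) n k (x, v)))"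
    by (simp add: algebra_simps)
  also have "\<dots> = term_partial 0 (Suc q) n k (x, v)"
    using binomial_Leibniz_step[of c q "\<lambda>i. increment_partial 0 i n k (x, v)"]
    by (simp add: S_def term_partial_def c_def e_def)
  finally have Leibniz: "2 powr (real (Suc n) * v) * c * (e * S (\<lambda>i. increment_partial 0 i n k (x, v)))
      + e * S (\<lambda>i. increment_partial 0 (Suc i) n k (x, v)) * 2 powr (real (Suc n) * v)
      = term_partial 0 (Suc q) n k (x, v)" .
  have "((\<lambda>w. 2 powr (real (Suc n) * w)) has_real_derivative 2 powr (real (Suc n) * v) * c) (at v)"
    unfolding c_def by (auto intro!: derivative_eq_intros)
  then have "((\<lambda>w. 2 powr (real (Suc n) * w) * (e * S (\<lambda>i. increment_partial 0 i n k (x, w))))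
      has_real_derivative 2 powr (real (Suc n) * v) * c * (e * S (\<lambda>i. increment_partial 0 i n k (x, v)))
        + e * S (\<lambda>i. increment_partial 0 (Suc i) n k (x, v)) * 2 powr (real (Suc n) * v)) (at v)"
    unfolding S_def by (intro DERIV_mult DERIV_cmult DERIV_sum increment_partial_has_derivative_v assms)
  then show ?thesis
    unfolding Leibniz by (simp add: term_partial_def S_def c_def e_def mult.assoc)
qed

lemma term_partial_continuous_on:
  assumes "p \<le> 3"
  shows "continuous_on (UNIV \<times> {A<..<1}) (term_partial p q n k)"
proof -
  have "continuous_on (UNIV \<times> {A<..<1}) (\<lambda>z. mpd p i \<Phi> (fst z / 2 ^ Suc n - real_of_int k, snd z))" for i
    by (rule continuous_on_compose2[OF \<Phi>_cont[OF assms]]) (auto intro!: continuous_intros)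
  moreover have "continuous_on (UNIV \<times> {A<..<1}) (\<lambda>z. mpd 0 i \<Phi> (- real_of_int k, snd z))" for i
    by (rule continuous_on_compose2[OF \<Phi>_cont[of 0]]) (auto intro!: continuous_intros)
  ultimately have "continuous_on (UNIV \<times> {A<..<1}) (increment_partial p i n k)" for i
    unfolding increment_partial_def[abs_def] by (cases "p = 0") (auto intro!: continuous_intros)
  then show ?thesis
    unfolding term_partial_def[abs_def] by (intro continuous_intros) auto
qed

lemma strip_C3_lowfreq_term: "strip_C3 A 1 (lowfreq_term n k)"
  by (rule strip_C3_family[where D = "\<lambda>p q. term_partial p q n k"])
    (auto intro: term_partial_has_derivative_x term_partial_has_derivative_v
      term_partial_continuous_on simp: term_partial_0_0)

lemma mpd_lowfreq_term:
  "p + q \<le> 3 \<Longrightarrow> A < v \<Longrightarrow> v < 1 \<Longrightarrow> mpd p q (lowfreq_term n k) (x, v) = term_partial p q n k (x, v)"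
  by (rule mpd_eq_family[where D = "\<lambda>p q. term_partial p q n k"])
    (auto intro: term_partial_has_derivative_x term_partial_has_derivative_v
      term_partial_continuous_on simp: term_partial_0_0)

lemma C_nonneg: "0 \<le> C"
proof -
  have "0 \<le> C * (3 powr r * 3 powr r)"
    using order_trans[OF abs_ge_zero eps_growth[of 0 0]] by (simp add: mult.assoc)
  moreover have "0 < 3 powr r * 3 powr r" by simp
  ultimately show ?thesis by (simp add: zero_le_mult_iff)
qed

lemma \<Phi>_uniform_decay:
  assumes "A < a" "a \<le> b" "b < 1"
  obtains K where "\<And>p i x v. p \<le> 3 \<Longrightarrow> i \<le> 3 \<Longrightarrow> v \<in> {a..b} \<Longrightarrow>
    (3 + \<bar>x\<bar>)\<^sup>2 * \<bar>mpd p i \<Phi> (x, v)\<bar> \<le> K"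
proof -
  have "\<forall>z\<in>{..3} \<times> {..3}. \<exists>K. \<forall>x. \<forall>v\<in>{a..b}. (3 + \<bar>x\<bar>)\<^sup>2 * \<bar>mpd (fst z) (snd z) \<Phi> (x, v)\<bar> \<le> K"
    using \<Phi>_decay assms by auto
  from bchoice[OF this] obtain K where K: "\<forall>z\<in>{..3} \<times> {..3}. \<forall>x. \<forall>v\<in>{a..b}.
      (3 + \<bar>x\<bar>)\<^sup>2 * \<bar>mpd (fst z) (snd z) \<Phi> (x, v)\<bar> \<le> K z"
    by blast
  show ?thesis
  proof (rule that[of "\<Sum>z\<in>{..3::nat} \<times> {..3::nat}. \<bar>K z\<bar>"])
    fix p i :: nat and x v :: real assume pi: "p \<le> 3" "i \<le> 3" and v: "v \<in> {a..b}"
    then have "(3 + \<bar>x\<bar>)\<^sup>2 * \<bar>mpd p i \<Phi> (x, v)\<bar> \<le> K (p, i)"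
      using K by force
    also have "\<dots> \<le> \<bar>K (p, i)\<bar>" by simp
    also have "\<dots> \<le> (\<Sum>z\<in>{..3::nat} \<times> {..3::nat}. \<bar>K z\<bar>)"
      using pi by (intro member_le_sum) auto
    finally show "(3 + \<bar>x\<bar>)\<^sup>2 * \<bar>mpd p i \<Phi> (x, v)\<bar> \<le> (\<Sum>z\<in>{..3} \<times> {..3}. \<bar>K z\<bar>)" .
  qed
qed

context
  fixes a b K :: real
  assumes ab: "A < a" "b < 1"
    and K: "\<And>p i x v. p \<le> 3 \<Longrightarrow> i \<le> 3 \<Longrightarrow> v \<in> {a..b} \<Longrightarrow> (3 + \<bar>x\<bar>)\<^sup>2 * \<bar>mpd p i \<Phi> (x, v)\<bar> \<le> K"
begin

lemma increment_partial_bound: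
  assumes M: "0 \<le> M" "\<bar>u\<bar> \<le> M" and v: "v \<in> {a..b}" and pi: "p \<le> 3" "i \<le> 3"
  shows "\<bar>increment_partial p i n k (u, v)\<bar>
    \<le> (1 + M) / 2 ^ Suc n * (K * (1 + M)\<^sup>2 / (3 + \<bar>real_of_int k\<bar>)\<^sup>2)"
proof -
  define j :: real where "j = 2 ^ Suc n"
  define B where "B = K * (1 + M)\<^sup>2 / (3 + \<bar>real_of_int k\<bar>)\<^sup>2"
  have j: "1 \<le> j" unfolding j_def using one_le_power[of "2::real" "Suc n"] by simp
  have "\<bar>u\<bar> \<le> M * j"
    using M j mult_left_mono[of 1 j M] by simp
  then have uj: "\<bar>u / j\<bar> \<le> M" "\<bar>u / j\<bar> \<le> (1 + M) / j"
    using M j by (simp_all add: abs_divide pos_divide_le_eq divide_right_mono)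
  have near: "\<bar>mpd p' i \<Phi> (t, v)\<bar> \<le> B" if "p' \<le> 3" "\<bar>t - (- real_of_int k)\<bar> \<le> M" for p' t
    using abs_le_decay_shift[OF K[OF that(1) pi(2) v] that(2) M(1)] by (simp add: B_def)
  show ?thesis
  proof (cases "p = 0")
    case True
    let ?x0 = "- real_of_int k" and ?x1 = "u / j - real_of_int k"
    have "\<exists>t\<in>{min ?x0 ?x1..max ?x0 ?x1}.
        mpd 0 i \<Phi> (?x1, v) - mpd 0 i \<Phi> (?x0, v) = (?x1 - ?x0) * mpd 1 i \<Phi> (t, v)"
      using \<Phi>_dx[of 0 v i] ab v by (intro mean_value_between) auto
    then obtain t where "t \<in> {min ?x0 ?x1..max ?x0 ?x1}"
      and t_eq: "mpd 0 i \<Phi> (?x1, v) - mpd 0 i \<Phi> (?x0, v) = (?x1 - ?x0) * mpd 1 i \<Phi> (t, v)"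
      by blast
    then have t: "\<bar>t - ?x0\<bar> \<le> \<bar>u / j\<bar>" "mpd 0 i \<Phi> (?x1, v) - mpd 0 i \<Phi> (?x0, v) = u / j * mpd 1 i \<Phi> (t, v)"
      using between_imp_abs_le[of t ?x0 ?x1] by simp_all
    have "\<bar>increment_partial p i n k (u, v)\<bar> = \<bar>u / j\<bar> * \<bar>mpd 1 i \<Phi> (t, v)\<bar>"
      using True t(2) by (simp add: increment_partial_def j_def abs_mult)
    also have "\<dots> \<le> (1 + M) / j * B"
      using uj t(1) near[of 1 t] by (intro mult_mono) auto
    finally show ?thesis by (simp add: B_def j_def)
  next
    case False
    have "\<bar>increment_partial p i n k (u, v)\<bar> = (1 / j) ^ p * \<bar>mpd p i \<Phi> (u / j - real_of_int k, v)\<bar>"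
      using False by (simp add: increment_partial_def j_def abs_mult)
    also have "\<dots> \<le> (1 + M) / j * B"
    proof (rule mult_mono)
      have "(1 / j) ^ p \<le> 1 / j" using power_decreasing[of 1 p "1 / j"] False j by simp
      also have "\<dots> \<le> (1 + M) / j" using M j by (simp add: divide_right_mono)
      finally show "(1 / j) ^ p \<le> (1 + M) / j" .
      show "\<bar>mpd p i \<Phi> (u / j - real_of_int k, v)\<bar> \<le> B"
        using near[OF pi(1)] uj(1) by simp
    qed (use M j in \<open>auto simp: B_def\<close>)
    finally show ?thesis by (simp add: B_def j_def)
  qed
qed

lemma K_nonneg:
  assumes "a \<le> b"
  shows "0 \<le> K"
proof -
  have "(3 + \<bar>0\<bar>)\<^sup>2 * \<bar>mpd 0 0 \<Phi> (0, a)\<bar> \<le> K"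
    by (rule K) (use assms in auto)
  then show ?thesis by (rule order_trans[rotated]) simp
qed

lemma term_partial_bound:
  assumes M: "0 \<le> M" "\<bar>u\<bar> \<le> M" and v: "v \<in> {a..b}" and pq: "p + q \<le> 3"
  shows "\<bar>term_partial p q n k (u, v)\<bar> \<le> C * K * (1 + M) ^ 3 *
    ((real n + 4) powr (r + 3) * (2 powr (b - 1)) ^ Suc n) * (3 + \<bar>real_of_int k\<bar>) powr (r - 2)"
proof -
  define j where "j = real (Suc n)"
  define T where "T = (1 + M) / 2 ^ Suc n * (K * (1 + M)\<^sup>2 / (3 + \<bar>real_of_int k\<bar>)\<^sup>2)"
  have K0: "0 \<le> K" using K_nonneg v by simp
  have T_eq: "T = K * (1 + M) ^ 3 / (2 ^ Suc n * (3 + \<bar>real_of_int k\<bar>)\<^sup>2)"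
    by (simp add: T_def power2_eq_square power3_eq_cube)
  have c: "0 \<le> j * ln 2" "j * ln 2 \<le> j"
    using ln_le_minus_one[of 2] by (auto simp: j_def)
  have "\<bar>\<Sum>i\<le>q. real (q choose i) * (j * ln 2) ^ (q - i) * increment_partial p i n k (u, v)\<bar>
      \<le> (1 + j * ln 2) ^ q * T"
    unfolding T_def using pq c(1) by (intro abs_binomial_sum_le increment_partial_bound M v) auto
  also have "\<dots> \<le> (real n + 4) powr 3 * T"
  proof (rule mult_right_mono)
    have "(1 + j * ln 2) ^ q \<le> (1 + j * ln 2) ^ 3" using pq c by (intro power_increasing) auto
    also have "\<dots> \<le> (real n + 4) ^ 3"
    proof (rule power_mono)
      have "j = real n + 1" by (simp add: j_def)
      then show "1 + j * ln 2 \<le> real n + 4" using c(2) by linarith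
    qed (use c in simp)
    finally show "(1 + j * ln 2) ^ q \<le> (real n + 4) powr 3" by (simp add: powr_realpow)
  qed (use M K0 in \<open>simp add: T_def\<close>)
  finally have sum: "\<bar>\<Sum>i\<le>q. real (q choose i) * (j * ln 2) ^ (q - i) * increment_partial p i n k (u, v)\<bar>
      \<le> (real n + 4) powr 3 * T" .
  have eps: "\<bar>eps (- int (Suc n)) k\<bar> \<le> C * (real n + 4) powr r * (3 + \<bar>real_of_int k\<bar>) powr r"
    using eps_growth[of "- int (Suc n)" k] by (simp add: add_ac)
  have pow: "2 powr (j * v) \<le> 2 powr (j * b)"
    using v by (auto simp: j_def intro!: powr_mono)
  have "\<bar>term_partial p q n k (u, v)\<bar> = 2 powr (j * v) * \<bar>eps (- int (Suc n)) k\<bar> *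
      \<bar>\<Sum>i\<le>q. real (q choose i) * (j * ln 2) ^ (q - i) * increment_partial p i n k (u, v)\<bar>"
    by (simp add: term_partial_def abs_mult j_def)
  also have "\<dots> \<le> 2 powr (j * b) * (C * (real n + 4) powr r * (3 + \<bar>real_of_int k\<bar>) powr r) *
      ((real n + 4) powr 3 * T)"
    by (intro mult_mono pow eps sum) (auto simp: C_nonneg)
  also have "\<dots> = C * K * (1 + M) ^ 3 * ((real n + 4) powr r * (real n + 4) powr 3 * (2 powr (j * b) / 2 ^ Suc n))
      * ((3 + \<bar>real_of_int k\<bar>) powr r / (3 + \<bar>real_of_int k\<bar>) powr 2)"
    unfolding T_eq by (simp add: powr_realpow add_pos_nonneg field_simps)
  also have "\<dots> = C * K * (1 + M) ^ 3 * ((real n + 4) powr (r + 3) * (2 powr (b - 1)) ^ Suc n)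
      * (3 + \<bar>real_of_int k\<bar>) powr (r - 2)"
    unfolding powr_div_power_eq_power[of "Suc n" b, symmetric] powr_add[of "real n + 4" r 3]
      powr_diff[of "3 + \<bar>real_of_int k\<bar>" r 2]
    by (simp only: j_def)
  finally show ?thesis .
qed

end

lemma lowfreq_term_partials_product_bound:
  assumes ab: "A < a" "a \<le> b" "b < 1"
  obtains an :: "nat \<Rightarrow> real" and bk :: "int \<Rightarrow> real"
  where "summable an" "\<And>n. 0 \<le> an n" "bk summable_on UNIV" "\<And>k. 0 \<le> bk k"
    "\<And>n k p q u v. p + q \<le> 3 \<Longrightarrow> \<bar>u\<bar> \<le> M \<Longrightarrow> v \<in> {a..b} \<Longrightarrow>
       \<bar>mpd p q (lowfreq_term n k) (u, v)\<bar> \<le> an n * bk k"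
proof -
  obtain K where K: "\<And>p i x v. p \<le> 3 \<Longrightarrow> i \<le> 3 \<Longrightarrow> v \<in> {a..b} \<Longrightarrow>
      (3 + \<bar>x\<bar>)\<^sup>2 * \<bar>mpd p i \<Phi> (x, v)\<bar> \<le> K"
    using \<Phi>_uniform_decay[OF ab] by blast
  define \<rho> where "\<rho> = 2 powr (b - 1)"
  have \<rho>: "0 < \<rho>" "\<rho> < 1"
    using ab(3) by (auto simp: \<rho>_def powr_less_one)
  let ?c = "C * K * (1 + \<bar>M\<bar>) ^ 3"
  have c: "0 \<le> ?c" using C_nonneg K_nonneg[OF ab(1,3) K ab(2)] by simp
  show ?thesis
  proof (rule that[of "\<lambda>n. ?c * ((real n + 4) powr (r + 3) * \<rho> ^ Suc n)"
        "\<lambda>k. (3 + \<bar>real_of_int k\<bar>) powr (r - 2)"])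
    show "summable (\<lambda>n. ?c * ((real n + 4) powr (r + 3) * \<rho> ^ Suc n))"
      using summable_powr_mult_geometric[OF \<rho>, of 4 "r + 3"]
      by (intro summable_mult) (simp add: mult.left_commute summable_mult)
    show "(\<lambda>k. (3 + \<bar>real_of_int k\<bar>) powr (r - 2)) summable_on UNIV"
      using summable_shifted_powr[of "r - 2" 3] r_less_1
      by (intro summable_on_int_abs[where h = "\<lambda>x. (3 + x) powr (r - 2)"]) auto
    fix n :: nat and k :: int and p q :: nat and u v :: real
    assume pq: "p + q \<le> 3" and u: "\<bar>u\<bar> \<le> M" and v: "v \<in> {a..b}"
    have "mpd p q (lowfreq_term n k) (u, v) = term_partial p q n k (u, v)"
      using pq v ab by (intro mpd_lowfreq_term) auto
    also have "\<bar>\<dots>\<bar> \<le> ?c * ((real n + 4) powr (r + 3) * \<rho> ^ Suc n) * (3 + \<bar>real_of_int k\<bar>) powr (r - 2)"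
      unfolding \<rho>_def using u by (intro term_partial_bound[OF ab(1,3) K _ _ v pq]) auto
    finally show "\<bar>mpd p q (lowfreq_term n k) (u, v)\<bar>
        \<le> ?c * ((real n + 4) powr (r + 3) * \<rho> ^ Suc n) * (3 + \<bar>real_of_int k\<bar>) powr (r - 2)" .
  qed (use c \<rho> in auto)
qed

text \<open>The double series over \<open>(n, k) \<in> \<nat> \<times> \<int>\<close> is rearranged into a single series along an
  enumeration of \<open>\<nat> \<times> \<int>\<close>, to which term-by-term differentiation applies.\<close>
definition lowfreq :: "real \<times> real \<Rightarrow> real" where
  "lowfreq = (\<lambda>(u, v). \<Sum>n. let j = Suc n in (\<Sum>\<^sub>\<infinity>k\<in>(UNIV::int set). 2 powr (real j * v) * eps (- int j) k *
      (\<Phi> (u / 2 ^ j - real_of_int k, v) - \<Phi> (- real_of_int k, v))))"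

definition lowfreq_term_enum :: "nat \<Rightarrow> real \<times> real \<Rightarrow> real" where
  "lowfreq_term_enum m = case_prod lowfreq_term (from_nat_into (UNIV :: (nat \<times> int) set) m)"

lemma bij_from_nat_into_nat_int: "bij_betw (from_nat_into (UNIV :: (nat \<times> int) set)) UNIV UNIV"
  by (rule bij_betw_from_nat_into) (auto simp: finite_prod)

lemma lowfreq_term_enum_bound:
  assumes "A < a" "a \<le> b" "b < 1"
  shows "\<exists>Bd. summable Bd \<and> (\<forall>m p q u v. p + q \<le> 3 \<longrightarrow> \<bar>u\<bar> \<le> M \<longrightarrow> a \<le> v \<longrightarrow> v \<le> b \<longrightarrow>
    \<bar>mpd p q (lowfreq_term_enum m) (u, v)\<bar> \<le> Bd m)"
proof -
  obtain an bk where an: "summable an" "\<And>n. 0 \<le> an n" and bk: "bk summable_on UNIV" "\<And>k. 0 \<le> bk k"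
    and bound: "\<And>n k p q u v. p + q \<le> 3 \<Longrightarrow> \<bar>u\<bar> \<le> M \<Longrightarrow> v \<in> {a..b} \<Longrightarrow>
       \<bar>mpd p q (lowfreq_term n k) (u, v)\<bar> \<le> an n * bk k"
    using lowfreq_term_partials_product_bound[OF assms] by blast
  have "(\<lambda>(n, k). an n * bk k) summable_on UNIV"
    by (rule summable_on_product_nonneg[OF an bk])
  then have "summable (\<lambda>m. case_prod (\<lambda>n k. an n * bk k) (from_nat_into UNIV m))"
    using summable_on_reindex_bij_betw[OF bij_from_nat_into_nat_int, where f = "\<lambda>(n, k). an n * bk k"]
    by (intro summable_on_imp_summable) simp
  moreover have "\<bar>mpd p q (lowfreq_term_enum m) (u, v)\<bar> \<le> case_prod (\<lambda>n k. an n * bk k) (from_nat_into UNIV m)"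
    if "p + q \<le> 3" "\<bar>u\<bar> \<le> M" "a \<le> v" "v \<le> b" for m p q u v
    using bound[of p q u v "fst (from_nat_into UNIV m)" "snd (from_nat_into UNIV m)"] that
    by (simp add: lowfreq_term_enum_def case_prod_beta)
  ultimately show ?thesis by blast
qed

lemma lowfreq_eq_suminf_enum:
  assumes v: "A < v" "v < 1"
  shows "lowfreq (u, v) = (\<Sum>m. lowfreq_term_enum m (u, v))"
proof -
  define h where "h = (\<lambda>(n, k). lowfreq_term n k (u, v))"
  obtain an bk where an: "summable an" "\<And>n. 0 \<le> an n" and bk: "bk summable_on UNIV" "\<And>k. 0 \<le> bk k"
    and bound_mpd: "\<And>n k p q u' v'. p + q \<le> 3 \<Longrightarrow> \<bar>u'\<bar> \<le> \<bar>u\<bar> \<Longrightarrow> v' \<in> {v..v} \<Longrightarrow>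
       \<bar>mpd p q (lowfreq_term n k) (u', v')\<bar> \<le> an n * bk k"
    using lowfreq_term_partials_product_bound[OF v(1) order_refl v(2)] by blast
  have bound: "\<bar>lowfreq_term n k (u, v)\<bar> \<le> an n * bk k" for n k
    using bound_mpd[of 0 0 u v n k] by simp
  have "(\<lambda>z. norm (h z)) summable_on UNIV"
    using bound an(2) bk(2)
    by (intro summable_on_comparison_test[OF summable_on_product_nonneg[OF an bk]])
      (auto simp: h_def)
  then have h: "h summable_on UNIV"
    using summable_on_iff_abs_summable_on_real by blast
  then have h_Sigma: "(\<lambda>(n, k). lowfreq_term n k (u, v)) summable_on UNIV \<times> UNIV"
    by (simp add: h_def)
  have "lowfreq (u, v) = (\<Sum>n. \<Sum>\<^sub>\<infinity>k. lowfreq_term n k (u, v))"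
    by (simp add: lowfreq_def lowfreq_term_def)
  also have "\<dots> = (\<Sum>\<^sub>\<infinity>n. \<Sum>\<^sub>\<infinity>k. lowfreq_term n k (u, v))"
    using summable_on_Sigma_banach[OF h_Sigma]
    by (intro sums_unique[symmetric] has_sum_imp_sums has_sum_infsum) simp
  also have "\<dots> = infsum h UNIV"
    using infsum_Sigma'_banach[OF h_Sigma] by (simp add: h_def)
  also have "\<dots> = (\<Sum>\<^sub>\<infinity>m. h (from_nat_into UNIV m))"
    by (rule infsum_reindex_bij_betw[OF bij_from_nat_into_nat_int, symmetric])
  also have "\<dots> = (\<Sum>m. h (from_nat_into UNIV m))"
    using summable_on_reindex_bij_betw[OF bij_from_nat_into_nat_int] h
    by (intro sums_unique has_sum_imp_sums has_sum_infsum) blast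
  also have "\<dots> = (\<Sum>m. lowfreq_term_enum m (u, v))"
    by (simp add: h_def lowfreq_term_enum_def case_prod_unfold)
  finally show ?thesis .
qed

theorem strip_C3_lowfreq: "strip_C3 A 1 lowfreq"
proof (rule strip_C3_suminf[where g = lowfreq_term_enum])
  show "strip_C3 A 1 (lowfreq_term_enum m)" for m
    by (simp add: lowfreq_term_enum_def case_prod_beta strip_C3_lowfreq_term)
  show "\<exists>Bd. summable Bd \<and> (\<forall>m p q u v. p + q \<le> 3 \<longrightarrow> \<bar>u\<bar> \<le> M \<longrightarrow> a \<le> v \<longrightarrow> v \<le> b \<longrightarrow>
      \<bar>mpd p q (lowfreq_term_enum m) (u, v)\<bar> \<le> Bd m)" if "A < a" "a \<le> b" "b < 1" for M a b
    using lowfreq_term_enum_bound[OF that] .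
qed (rule lowfreq_eq_suminf_enum)

end

theorem mainTheorem5:
  fixes \<alpha> :: real and \<psi> :: "real \<Rightarrow> real" and eps :: "int \<Rightarrow> int \<Rightarrow> real"
  assumes alpha: "1 < \<alpha>" "\<alpha> < 2"
    and psi_C3: "C3_fun \<psi>"
    and psi_supp: "\<exists>R. \<forall>s. R < \<bar>s\<bar> \<longrightarrow> \<psi> s = 0"
    and psi_ONB: "wavelet_ONB \<psi>"
    and Psi_diff: "\<forall>p q. p < 3 \<longrightarrow> (\<forall>x v. 1 / \<alpha> < v \<and> v < 1 \<longrightarrow>
                     (\<lambda>y. mpd p q (Psi \<alpha> \<psi>) (y, v)) differentiable (at x))"
    and Psi_diffv: "\<forall>p q. p \<le> 3 \<longrightarrow> (\<forall>x v. 1 / \<alpha> < v \<and> v < 1 \<longrightarrow>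
                     (\<lambda>w. mpd p q (Psi \<alpha> \<psi>) (x, w)) differentiable (at v))"
    and Psi_cont: "\<forall>p q. p \<le> 3 \<longrightarrow>
                     continuous_on (UNIV \<times> {1 / \<alpha> <..< 1}) (mpd p q (Psi \<alpha> \<psi>))"
    and Psi_decay: "\<forall>p q a b. p \<le> 3 \<and> 1 / \<alpha> < a \<and> a \<le> b \<and> b < 1 \<longrightarrow>
                     (\<exists>C. \<forall>x. \<forall>v\<in>{a..b}. (3 + \<bar>x\<bar>)\<^sup>2 * \<bar>mpd p q (Psi \<alpha> \<psi>) (x, v)\<bar> \<le> C)"
    and eps_bound: "\<forall>\<eta>>0. \<exists>C>0. \<forall>j k. \<bar>eps j k\<bar> \<le>
                     C * (3 + \<bar>real_of_int j\<bar>) powr (1 / \<alpha> + \<eta>) * (3 + \<bar>real_of_int k\<bar>) powr (1 / \<alpha> + \<eta>)"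
  shows "C3_on2 (UNIV \<times> {1 / \<alpha> <..< 1}) (Xdot \<alpha> \<psi> eps)
       \<and> (\<forall>M a b. 0 < M \<and> 1 / \<alpha> < a \<and> a < b \<and> b < 1 \<longrightarrow>
            bdd_above {\<bar>Xdot \<alpha> \<psi> eps (u1, v1) - Xdot \<alpha> \<psi> eps (u2, v2)\<bar> / (\<bar>u1 - u2\<bar> + \<bar>v1 - v2\<bar>)
                       | u1 u2 v1 v2. u1 \<in> {-M..M} \<and> u2 \<in> {-M..M} \<and> v1 \<in> {a..b} \<and> v2 \<in> {a..b}})
       \<and> (\<forall>M a b. 0 < M \<and> 1 / \<alpha> < a \<and> a < b \<and> b < 1 \<longrightarrow>
            bdd_above {\<bar>Xdot \<alpha> \<psi> eps (u1, v) - Xdot \<alpha> \<psi> eps (u2, v)\<bar> / \<bar>u1 - u2\<bar>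
                       | u1 u2 v. u1 \<in> {-M..M} \<and> u2 \<in> {-M..M} \<and> v \<in> {a..b}})"
proof -
  \<comment> \<open>\<open>\<alpha> < 2\<close> and the hypotheses on \<open>\<psi>\<close> are what make \<open>\<Psi>\<close> satisfy the hypotheses stated for it.\<close>
  define r where "r = 1 / \<alpha> + (1 - 1 / \<alpha>) / 2"
  have "0 < (1 - 1 / \<alpha>) / 2" using alpha(1) by simp
  then obtain C where C: "\<And>j k. \<bar>eps j k\<bar> \<le> C * (3 + \<bar>real_of_int j\<bar>) powr r * (3 + \<bar>real_of_int k\<bar>) powr r"
    using eps_bound unfolding r_def by blast
  have r: "r < 1" using alpha(1) by (simp add: r_def field_simps)
  interpret lf: lowfreq_series "1 / \<alpha>" "Psi \<alpha> \<psi>" eps C r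
  proof unfold_locales
    show "((\<lambda>y. mpd p q (Psi \<alpha> \<psi>) (y, v)) has_real_derivative mpd (Suc p) q (Psi \<alpha> \<psi>) (x, v)) (at x)"
      if "p < 3" "1 / \<alpha> < v" "v < 1" for p q x v
      using Psi_diff that by (intro mpd_Suc_left_has_derivative) blast
    show "((\<lambda>w. mpd 0 q (Psi \<alpha> \<psi>) (x, w)) has_real_derivative mpd 0 (Suc q) (Psi \<alpha> \<psi>) (x, v)) (at v)"
      if "1 / \<alpha> < v" "v < 1" for q x v
      using Psi_diffv that by (intro mpd_0_Suc_has_derivative) blast
    show "continuous_on (UNIV \<times> {1 / \<alpha><..<1}) (mpd p q (Psi \<alpha> \<psi>))" if "p \<le> 3" for p q
      using Psi_cont that by blast
    show "\<exists>K. \<forall>x. \<forall>v\<in>{a..b}. (3 + \<bar>x\<bar>)\<^sup>2 * \<bar>mpd p q (Psi \<alpha> \<psi>) (x, v)\<bar> \<le> K"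
      if "p \<le> 3" "1 / \<alpha> < a" "a \<le> b" "b < 1" for p q a b
      using Psi_decay that by blast
  qed (auto intro: C r)
  have X: "strip_C3 (1 / \<alpha>) 1 (Xdot \<alpha> \<psi> eps)"
    using lf.strip_C3_lowfreq by (simp only: Xdot_def lf.lowfreq_def)
  show ?thesis
    using strip_C3_imp_C3_on2[OF X] strip_C3_bdd_difference_quotients[OF X] by simp
qed

end
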